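(* For every alternation flag $\alpha$, every hyperassignment $\mathcal X\in\mathrm{HAsg}$ and every behavioral quantifier prefix $\wp$ with pairwise distinct propositions and $\mathrm{ap}(\wp)\cap\mathrm{ap}(\mathcal X)=\emptyset$: $$\mathrm{evl}_\alpha(\mathcal X,C_{\bar\alpha}(\wp))\sqsubseteq\mathrm{evl}_\alpha(\mathcal X,\wp)\sqsubseteq\mathrm{evl}_\alpha(\mathcal X,C_\alpha(\wp)).$$
   Context: Let $AP$ be a set of atomic propositions and $\mathbb B=\{\top,\bot\}$. A temporal valuation is a function $f:\mathbb N\to\mathbb B$. An assignment is a partial function $\chi:AP\rightharpoonup(\mathbb N\to\mathbb B)$; $\mathrm{Asg}$ is the set of all assignments, $\mathrm{Asg}(P)$ the set of assignments with domain exactly $P\subseteq AP$. For an assignment $\chi$, $p\in AP$ and a temporal valuation $f$, $\chi[p\mapsto f]$ is the assignment that agrees with $\chi$ except that it maps $p$ to $f$. A hyperassignment is a set $\mathcal X$ with $\emptyset\neq\mathcal X\subseteq 2^{\mathrm{Asg}(P)}$ and $\emptyset\notin\mathcal X$, for some $P\subseteq AP$; this $P$ is denoted $\mathrm{ap}(\mathcal X)$. $\mathrm{HAsg}$ is the set of all hyperassignments. For $\mathcal X_1,\mathcal X_2\in\mathrm{HAsg}$, $\mathcal X_1\sqsubseteq\mathcal X_2$ iff for every $X_1\in\mathcal X_1$ there is $X_2\in\mathcal X_2$ with $X_2\subseteq X_1$. A choice function for $\mathcal X$ is a map $c:\mathcal X\to\mathrm{Asg}$ with $c(X)\in X$ for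 all $X\in\mathcal X$. The dual of $\mathcal X$ is $\overline{\mathcal X}=\{\mathrm{img}(c): c\text{ a choice function for }\mathcal X\}$. A functor over $P\subseteq AP$ is a function $F:\mathrm{Asg}(P)\to(\mathbb N\to\mathbb B)$; $\mathrm{Fnc}(P)$ is the set of all of them. $\mathrm{ext}(\chi,F,p)=\chi[p\mapsto F(\chi)]$ and $\mathrm{ext}(X,F,p)=\{\mathrm{ext}(\chi,F,p):\chi\in X\}$. For $\chi_1,\chi_2\in\mathrm{Asg}(P)$, $p\in P$, $k\in\mathbb N$: $\chi_1\approx^{>k}_p\chi_2$ iff $\chi_1(q)=\chi_2(q)$ for all $q\in P\setminus\{p\}$ and $\chi_1(p)(t)=\chi_2(p)(t)$ for all $t\le k$; $\chi_1\approx^{\ge k}_p\chi_2$ is defined the same way with $t<k$ in place of $t\le k$. $F\in\mathrm{Fnc}(P)$ is behavioral (resp. strongly behavioral) w.r.t. $p\in P$ if $F(\chi_1)(k)=F(\chi_2)(k)$ for all $k\in\mathbb N$ and all $\chi_1,\chi_2$ with $\chi_1\approx^{>k}_p\chi_2$ (resp. $\chi_1\approx^{\ge k}_p\chi_2$). A quantifier specification is a pair $\sigma=\langle P_B,P_S\rangle$ of subsets of $AP$; $\mathrm{Fnc}_\sigma(P)$ is the set of $F\in\mathrm{Fnc}(P)$ that are behavioral w.r.t. every $p\in P_B\cap P$ and strongly behavioral w.r.t. every $p\in P_S\cap P$. $\mathrm{ext}_\sigma(\mathcal X,p)=\{\mathrm{ext}(X,F,p):X\in\mathcal X,\ F\in\mathrm{Fnc}_\sigma(\mathrm{ap}(\mathcal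 X))\}$. Union of specifications is componentwise: $\langle P_{B1},P_{S1}\rangle\cup\langle P_{B2},P_{S2}\rangle=\langle P_{B1}\cup P_{B2},P_{S1}\cup P_{S2}\rangle$. Write $\mathsf B=\langle AP,\emptyset\rangle$. A quantifier prefix is a finite sequence $\wp=Q_1^{\sigma_1}p_1\cdots Q_n^{\sigma_n}p_n$ with $Q_i\in\{\exists,\forall\}$, quantifier specifications $\sigma_i$ and $p_i\in AP$; $\mathrm{ap}(\wp)=\{p_1,\dots,p_n\}$, $\epsilon$ is the empty prefix. It is behavioral if every $\sigma_i=\mathsf B$. For a vector $\vec p=p_1\cdots p_m$, $Q^\sigma\vec p$ abbreviates $Q^\sigma p_1\cdots Q^\sigma p_m$. Alternation flags are $\exists\forall$ and $\forall\exists$; $\bar\alpha$ is the other flag. The quantifier $\exists$ is $\exists\forall$-coherent and $\forall$ is $\forall\exists$-coherent. Evolution: $\mathrm{evl}_\alpha(\mathcal X,Q^\sigma p)=\mathrm{ext}_\sigma(\mathcal X,p)$ if $Q$ is $\alpha$-coherent, and $\mathrm{evl}_\alpha(\mathcal X,Q^\sigma p)=\overline{\mathrm{ext}_\sigma(\overline{\mathcal X},p)}$ otherwise; $\mathrm{evl}_\alpha(\mathcal X,\epsilon)=\mathcal X$ and $\mathrm{evl}_\alpha(\mathcal X,Q^\sigma p.\wp)=\mathrm{evl}_\alpha(\mathrm{evl}_\alpha(\mathcal X,Q^\sigma p),\wp)$. Canonical forms. Every behavioral prefix $\wp$ can be uniquely written as $\exists^{\mathsf B}\vec q_0.\forall^{\mathsf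 B}\vec p_1.\exists^{\mathsf B}\vec q_1\cdots\forall^{\mathsf B}\vec p_k.\exists^{\mathsf B}\vec q_k.\forall^{\mathsf B}\vec p_{k+1}$ with $k\in\mathbb N$, $\vec q_0,\vec p_{k+1}$ possibly empty and $\vec p_i,\vec q_i$ nonempty for $1\le i\le k$; then $C_{\exists\forall}(\wp)=\exists^{\mathsf B}\vec q_0\cdots\exists^{\mathsf B}\vec q_k.\forall^{\tau_1}\vec p_1\cdots\forall^{\tau_{k+1}}\vec p_{k+1}$ where $\tau_i=\mathsf B\cup\langle\emptyset,\vec q_i\cup\cdots\cup\vec q_k\rangle$ (for $i=k+1$, $\tau_{k+1}=\mathsf B$). Dually, writing $\wp$ uniquely as $\forall^{\mathsf B}\vec p_0.\exists^{\mathsf B}\vec q_1.\forall^{\mathsf B}\vec p_1\cdots\exists^{\mathsf B}\vec q_k.\forall^{\mathsf B}\vec p_k.\exists^{\mathsf B}\vec q_{k+1}$ (with $\vec p_0,\vec q_{k+1}$ possibly empty, the others nonempty), $C_{\forall\exists}(\wp)=\forall^{\mathsf B}\vec p_0\cdots\forall^{\mathsf B}\vec p_k.\exists^{\tau_1}\vec q_1\cdots\exists^{\tau_{k+1}}\vec q_{k+1}$ with $\tau_i=\mathsf B\cup\langle\emptyset,\vec p_i\cup\cdots\cup\vec p_k\rangle$. *)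

theory Defs
  imports Main
begin

type_synonym tval = "nat \<Rightarrow> bool"
type_synonym 'ap asg = "'ap \<Rightarrow> tval option"
type_synonym 'ap hasg = "'ap asg set set"

definition Asg :: "'ap set \<Rightarrow> 'ap asg set" where
  "Asg P = {\<chi>. dom \<chi> = P}"

definition is_hasg :: "'ap hasg \<Rightarrow> bool" where
  "is_hasg \<X> \<longleftrightarrow> \<X> \<noteq> {} \<and> {} \<notin> \<X> \<and> (\<exists>P. \<forall>X\<in>\<X>. X \<subseteq> Asg P)"

text \<open>ap of a hyperassignment: the common domain of its assignments.\<close>
definition hap :: "'ap hasg \<Rightarrow> 'ap set" where
  "hap \<X> = dom (SOME \<chi>. \<exists>X\<in>\<X>. \<chi> \<in> X)"

definition hle :: "'ap hasg \<Rightarrow> 'ap hasg \<Rightarrow> bool" (infix "\<sqsubseteq>\<^sub>H" 50) where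
  "\<X>1 \<sqsubseteq>\<^sub>H \<X>2 \<longleftrightarrow> (\<forall>X1\<in>\<X>1. \<exists>X2\<in>\<X>2. X2 \<subseteq> X1)"

definition choice_fun :: "'ap hasg \<Rightarrow> ('ap asg set \<Rightarrow> 'ap asg) \<Rightarrow> bool" where
  "choice_fun \<X> c \<longleftrightarrow> (\<forall>X\<in>\<X>. c X \<in> X)"

definition dual :: "'ap hasg \<Rightarrow> 'ap hasg" where
  "dual \<X> = {c ` \<X> | c. choice_fun \<X> c}"

text \<open>Functors over P: functions Asg(P) to valuations (values outside Asg(P) are irrelevant).\<close>
type_synonym 'ap fnc = "'ap asg \<Rightarrow> tval"

definition ext_asg :: "'ap asg \<Rightarrow> 'ap fnc \<Rightarrow> 'ap \<Rightarrow> 'ap asg" where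
  "ext_asg \<chi> F p = \<chi>(p := Some (F \<chi>))"

definition ext_set :: "'ap asg set \<Rightarrow> 'ap fnc \<Rightarrow> 'ap \<Rightarrow> 'ap asg set" where
  "ext_set X F p = {ext_asg \<chi> F p | \<chi>. \<chi> \<in> X}"

definition agree_gt :: "'ap set \<Rightarrow> 'ap \<Rightarrow> nat \<Rightarrow> 'ap asg \<Rightarrow> 'ap asg \<Rightarrow> bool" where
  "agree_gt P p k \<chi>1 \<chi>2 \<longleftrightarrow> (\<forall>q\<in>P - {p}. \<chi>1 q = \<chi>2 q) \<and>
      (\<forall>t\<le>k. the (\<chi>1 p) t = the (\<chi>2 p) t)"

definition agree_ge :: "'ap set \<Rightarrow> 'ap \<Rightarrow> nat \<Rightarrow> 'ap asg \<Rightarrow> 'ap asg \<Rightarrow> bool" where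
  "agree_ge P p k \<chi>1 \<chi>2 \<longleftrightarrow> (\<forall>q\<in>P - {p}. \<chi>1 q = \<chi>2 q) \<and>
      (\<forall>t<k. the (\<chi>1 p) t = the (\<chi>2 p) t)"

definition behavioral :: "'ap set \<Rightarrow> 'ap fnc \<Rightarrow> 'ap \<Rightarrow> bool" where
  "behavioral P F p \<longleftrightarrow> (\<forall>k \<chi>1 \<chi>2. \<chi>1 \<in> Asg P \<longrightarrow> \<chi>2 \<in> Asg P \<longrightarrow>
      agree_gt P p k \<chi>1 \<chi>2 \<longrightarrow> F \<chi>1 k = F \<chi>2 k)"

definition strongly_behavioral :: "'ap set \<Rightarrow> 'ap fnc \<Rightarrow> 'ap \<Rightarrow> bool" where
  "strongly_behavioral P F p \<longleftrightarrow> (\<forall>k \<chi>1 \<chi>2. \<chi>1 \<in> Asg P \<longrightarrow> \<chi>2 \<in> Asg P \<longrightarrow>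
      agree_ge P p k \<chi>1 \<chi>2 \<longrightarrow> F \<chi>1 k = F \<chi>2 k)"

type_synonym 'ap qspec = "'ap set \<times> 'ap set"

definition Fnc_spec :: "'ap qspec \<Rightarrow> 'ap set \<Rightarrow> 'ap fnc set" where
  "Fnc_spec \<sigma> P = {F. (\<forall>p\<in>fst \<sigma> \<inter> P. behavioral P F p) \<and>
                        (\<forall>p\<in>snd \<sigma> \<inter> P. strongly_behavioral P F p)}"

definition ext_spec :: "'ap qspec \<Rightarrow> 'ap hasg \<Rightarrow> 'ap \<Rightarrow> 'ap hasg" where
  "ext_spec \<sigma> \<X> p = {ext_set X F p | X F. X \<in> \<X> \<and> F \<in> Fnc_spec \<sigma> (hap \<X>)}"

definition spec_union :: "'ap qspec \<Rightarrow> 'ap qspec \<Rightarrow> 'ap qspec" where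
  "spec_union s1 s2 = (fst s1 \<union> fst s2, snd s1 \<union> snd s2)"

definition specB :: "'ap qspec" where
  "specB = (UNIV, {})"

datatype quant = QEx | QAll
datatype aflag = EA | AE

type_synonym 'ap prefix = "(quant \<times> 'ap qspec \<times> 'ap) list"

definition prefix_ap :: "'ap prefix \<Rightarrow> 'ap set" where
  "prefix_ap w = set (map (\<lambda>(Q, \<sigma>, p). p) w)"

definition behavioral_prefix :: "'ap prefix \<Rightarrow> bool" where
  "behavioral_prefix w \<longleftrightarrow> (\<forall>(Q, \<sigma>, p) \<in> set w. \<sigma> = specB)"

fun flag_bar :: "aflag \<Rightarrow> aflag" where
  "flag_bar EA = AE" | "flag_bar AE = EA"

fun coh_quant :: "aflag \<Rightarrow> quant" where
  "coh_quant EA = QEx" | "coh_quant AE = QAll"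

definition evl1 :: "aflag \<Rightarrow> 'ap hasg \<Rightarrow> quant \<Rightarrow> 'ap qspec \<Rightarrow> 'ap \<Rightarrow> 'ap hasg" where
  "evl1 \<alpha> \<X> Q \<sigma> p = (if Q = coh_quant \<alpha> then ext_spec \<sigma> \<X> p
                       else dual (ext_spec \<sigma> (dual \<X>) p))"

fun evl :: "aflag \<Rightarrow> 'ap hasg \<Rightarrow> 'ap prefix \<Rightarrow> 'ap hasg" where
  "evl \<alpha> \<X> [] = \<X>"
| "evl \<alpha> \<X> ((Q, \<sigma>, p) # w) = evl \<alpha> (evl1 \<alpha> \<X> Q \<sigma> p) w"

text \<open>For a behavioral prefix written in blocks, the
  alpha-coherent (leading) blocks are moved to the front (keeping order, with spec B),
  followed by the remaining blocks in order, where each proposition of the i-th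
  non-leading block gets spec B union (empty, union of all leading blocks after it).
  For a proposition of block i, the leading blocks after it in the prefix are exactly
  the leading blocks i..k of the decomposition, so this is computed positionally.\<close>
definition lead_props :: "quant \<Rightarrow> 'ap prefix \<Rightarrow> 'ap set" where
  "lead_props Q w = {p. \<exists>\<sigma>. (Q, \<sigma>, p) \<in> set w}"

fun canon_trail :: "quant \<Rightarrow> 'ap prefix \<Rightarrow> 'ap prefix" where
  "canon_trail L [] = []"
| "canon_trail L ((Q, \<sigma>, p) # w) =
     (if Q = L then canon_trail L w
      else (Q, spec_union specB ({}, lead_props L w), p) # canon_trail L w)"

definition canon :: "aflag \<Rightarrow> 'ap prefix \<Rightarrow> 'ap prefix" where
  "canon \<alpha> w = [(Q, \<sigma>, p) \<leftarrow> w. Q = coh_quant \<alpha>] @ canon_trail (coh_quant \<alpha>) w"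

end

theory Submission
  imports Defs
begin

text \<open>The upper bound is obtained by moving every non-coherent quantifier behind the block
  of coherent quantifiers that follows it, one quantifier at a time. A single swap is sound
  provided the functor of the non-coherent variable may from then on depend strongly
  behaviorally on the coherent variable it overtakes: the two functors then determine each
  other's values by a causal recursion over time, so the opponent can reproduce every outcome
  of the original order. Evolution is monotone for \<open>\<sqsubseteq>\<^sub>H\<close>, so the swaps compose. The lower
  bound follows by duality: evolving under \<open>flag_bar \<beta>\<close> is equivalent to dualising, evolving
  under \<open>\<beta>\<close> and dualising again, and the dual is antitone.\<close>

definition hasg_over :: "'ap hasg \<Rightarrow> 'ap set \<Rightarrow> bool" where
  "hasg_over \<X> P \<longleftrightarrow> \<X> \<noteq> {} \<and> {} \<notin> \<X> \<and> (\<forall>X\<in>\<X>. X \<subseteq> Asg P)"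

definition hequiv :: "'ap hasg \<Rightarrow> 'ap hasg \<Rightarrow> bool" (infix "\<simeq>\<^sub>H" 50) where
  "\<X> \<simeq>\<^sub>H \<Y> \<longleftrightarrow> \<X> \<sqsubseteq>\<^sub>H \<Y> \<and> \<Y> \<sqsubseteq>\<^sub>H \<X>"

lemma hap_eq:
  assumes "hasg_over \<X> P"
  shows "hap \<X> = P"
proof -
  from assms obtain \<chi> X where "\<chi> \<in> X" "X \<in> \<X>"
    unfolding hasg_over_def by (metis all_not_in_conv)
  then have "\<exists>X\<in>\<X>. (SOME \<chi>. \<exists>X\<in>\<X>. \<chi> \<in> X) \<in> X"
    by (intro someI_ex[of "\<lambda>\<chi>. \<exists>X\<in>\<X>. \<chi> \<in> X"]) blast
  then have "(SOME \<chi>. \<exists>X\<in>\<X>. \<chi> \<in> X) \<in> Asg P"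
    using assms unfolding hasg_over_def by blast
  then show ?thesis
    unfolding hap_def Asg_def by simp
qed

lemma hasg_over_hap:
  assumes "is_hasg \<X>"
  shows "hasg_over \<X> (hap \<X>)"
proof -
  from assms obtain P where P: "hasg_over \<X> P"
    unfolding is_hasg_def hasg_over_def by blast
  with hap_eq[OF P] show ?thesis
    by simp
qed

subsection \<open>The preorder on hyperassignments and dual hyperassignments\<close>

lemma hle_refl [simp]: "\<X> \<sqsubseteq>\<^sub>H \<X>"
  unfolding hle_def by blast

lemma hle_trans [trans]: "\<X> \<sqsubseteq>\<^sub>H \<Y> \<Longrightarrow> \<Y> \<sqsubseteq>\<^sub>H \<Z> \<Longrightarrow> \<X> \<sqsubseteq>\<^sub>H \<Z>"
  unfolding hle_def by (meson order_trans)

lemma hequiv_trans [trans]: "\<X> \<simeq>\<^sub>H \<Y> \<Longrightarrow> \<Y> \<simeq>\<^sub>H \<Z> \<Longrightarrow> \<X> \<simeq>\<^sub>H \<Z>"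
  unfolding hequiv_def using hle_trans by blast

lemma hequiv_sym: "\<X> \<simeq>\<^sub>H \<Y> \<Longrightarrow> \<Y> \<simeq>\<^sub>H \<X>"
  unfolding hequiv_def by blast

lemma dual_memI: "choice_fun \<X> c \<Longrightarrow> c ` \<X> \<in> dual \<X>"
  unfolding dual_def by blast

lemma dual_memE:
  assumes "T \<in> dual \<X>"
  obtains c where "T = c ` \<X>" and "choice_fun \<X> c"
  using assms unfolding dual_def by blast

lemma hle_dual_iff: "\<X> \<sqsubseteq>\<^sub>H dual \<Y> \<longleftrightarrow> (\<forall>X\<in>\<X>. \<forall>Y\<in>\<Y>. X \<inter> Y \<noteq> {})"
proof
  assume le: "\<X> \<sqsubseteq>\<^sub>H dual \<Y>"
  show "\<forall>X\<in>\<X>. \<forall>Y\<in>\<Y>. X \<inter> Y \<noteq> {}"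
  proof (intro ballI)
    fix X Y assume "X \<in> \<X>" "Y \<in> \<Y>"
    with le obtain c where "choice_fun \<Y> c" "c ` \<Y> \<subseteq> X"
      unfolding hle_def dual_def by auto
    with \<open>Y \<in> \<Y>\<close> show "X \<inter> Y \<noteq> {}"
      unfolding choice_fun_def by auto
  qed
next
  assume meet: "\<forall>X\<in>\<X>. \<forall>Y\<in>\<Y>. X \<inter> Y \<noteq> {}"
  show "\<X> \<sqsubseteq>\<^sub>H dual \<Y>"
    unfolding hle_def
  proof
    fix X assume "X \<in> \<X>"
    with meet have "\<forall>Y\<in>\<Y>. \<exists>\<chi>. \<chi> \<in> X \<inter> Y"
      by blast
    then obtain c where "\<forall>Y\<in>\<Y>. c Y \<in> X \<inter> Y"
      by (rule bchoice[elim_format]) blast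
    then have "choice_fun \<Y> c" "c ` \<Y> \<subseteq> X"
      unfolding choice_fun_def by auto
    then show "\<exists>T\<in>dual \<Y>. T \<subseteq> X"
      unfolding dual_def by auto
  qed
qed

lemma dual_antimono:
  assumes "\<X> \<sqsubseteq>\<^sub>H \<Y>"
  shows "dual \<Y> \<sqsubseteq>\<^sub>H dual \<X>"
  unfolding hle_dual_iff
proof (intro ballI)
  fix T X assume "T \<in> dual \<Y>" "X \<in> \<X>"
  with assms obtain c Y where "T = c ` \<Y>" "choice_fun \<Y> c" "Y \<in> \<Y>" "Y \<subseteq> X"
    unfolding dual_def hle_def by blast
  then show "T \<inter> X \<noteq> {}"
    unfolding choice_fun_def by blast
qed

lemma dual_cong: "\<X> \<simeq>\<^sub>H \<Y> \<Longrightarrow> dual \<X> \<simeq>\<^sub>H dual \<Y>"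
  unfolding hequiv_def using dual_antimono by blast

lemma hle_dual_dual: "\<X> \<sqsubseteq>\<^sub>H dual (dual \<X>)"
  unfolding hle_dual_iff
proof (intro ballI)
  fix X T assume "X \<in> \<X>" "T \<in> dual \<X>"
  then show "X \<inter> T \<noteq> {}"
    unfolding dual_def choice_fun_def by blast
qed

lemma dual_dual_hle: "dual (dual \<X>) \<sqsubseteq>\<^sub>H \<X>"
  unfolding hle_def
proof
  fix T assume "T \<in> dual (dual \<X>)"
  then obtain d where T: "T = d ` dual \<X>" and d: "choice_fun (dual \<X>) d"
    unfolding dual_def by blast
  show "\<exists>X\<in>\<X>. X \<subseteq> T"
  proof (rule ccontr)
    assume "\<not> (\<exists>X\<in>\<X>. X \<subseteq> T)"
    then have "\<forall>X\<in>\<X>. \<exists>\<chi>. \<chi> \<in> X - T"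
      by blast
    then obtain c where c: "\<forall>X\<in>\<X>. c X \<in> X - T"
      by (rule bchoice[elim_format]) blast
    then have "c ` \<X> \<in> dual \<X>"
      unfolding dual_def choice_fun_def by blast
    with d obtain X where "X \<in> \<X>" "d (c ` \<X>) = c X"
      unfolding choice_fun_def by blast
    moreover have "d (c ` \<X>) \<in> T"
      using T \<open>c ` \<X> \<in> dual \<X>\<close> by blast
    ultimately show False
      using c by (metis Diff_iff)
  qed
qed

lemma dual_dual_hequiv: "dual (dual \<X>) \<simeq>\<^sub>H \<X>"
  unfolding hequiv_def using hle_dual_dual dual_dual_hle by blast

lemma hasg_over_dual:
  assumes "hasg_over \<X> P"
  shows "hasg_over (dual \<X>) P"
proof -
  from assms obtain c where "choice_fun \<X> c"
    unfolding hasg_over_def choice_fun_def by (metis bchoice ex_in_conv)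
  then have "dual \<X> \<noteq> {}"
    unfolding dual_def by blast
  with assms show ?thesis
    unfolding hasg_over_def dual_def choice_fun_def by blast
qed

lemma choice_fun_image_pullback:
  assumes "choice_fun ((\<lambda>X. f ` X) ` \<X>) w"
  obtains c where "choice_fun \<X> c" and "\<forall>X\<in>\<X>. f (c X) = w (f ` X)"
proof -
  have "\<forall>X\<in>\<X>. \<exists>\<chi>. \<chi> \<in> X \<and> f \<chi> = w (f ` X)"
    using assms unfolding choice_fun_def by (metis (no_types, lifting) imageE imageI)
  then obtain c where "\<forall>X\<in>\<X>. c X \<in> X \<and> f (c X) = w (f ` X)"
    by (rule bchoice[elim_format]) blast
  with that show thesis
    unfolding choice_fun_def by blast
qed

subsection \<open>Extension by functors and evolution\<close>

lemma ext_set_eq_image: "ext_set X F p = (\<lambda>\<chi>. ext_asg \<chi> F p) ` X"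
  unfolding ext_set_def by blast

lemma Fnc_spec_iff:
  "F \<in> Fnc_spec (UNIV, S) P \<longleftrightarrow>
     (\<forall>r\<in>P. behavioral P F r) \<and> (\<forall>s\<in>S \<inter> P. strongly_behavioral P F s)"
  unfolding Fnc_spec_def by auto

lemma Fnc_spec_specB_iff: "F \<in> Fnc_spec specB P \<longleftrightarrow> (\<forall>r\<in>P. behavioral P F r)"
  unfolding specB_def Fnc_spec_iff by simp

lemma const_in_Fnc_spec: "(\<lambda>_. f) \<in> Fnc_spec \<sigma> P"
  unfolding Fnc_spec_def behavioral_def strongly_behavioral_def by simp

lemma behavioralD:
  "behavioral P F r \<Longrightarrow> \<chi>1 \<in> Asg P \<Longrightarrow> \<chi>2 \<in> Asg P \<Longrightarrow> agree_gt P r k \<chi>1 \<chi>2 \<Longrightarrow>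
    F \<chi>1 k = F \<chi>2 k"
  unfolding behavioral_def by blast

lemma strongly_behavioralD:
  "strongly_behavioral P F r \<Longrightarrow> \<chi>1 \<in> Asg P \<Longrightarrow> \<chi>2 \<in> Asg P \<Longrightarrow> agree_ge P r k \<chi>1 \<chi>2 \<Longrightarrow>
    F \<chi>1 k = F \<chi>2 k"
  unfolding strongly_behavioral_def by blast

lemma agree_gt_mono: "agree_gt P r k \<chi>1 \<chi>2 \<Longrightarrow> j \<le> k \<Longrightarrow> agree_gt P r j \<chi>1 \<chi>2"
  unfolding agree_gt_def by auto

lemma agree_ge_mono: "agree_ge P r k \<chi>1 \<chi>2 \<Longrightarrow> j \<le> k \<Longrightarrow> agree_ge P r j \<chi>1 \<chi>2"
  unfolding agree_ge_def by auto

lemma agree_ge_imp_gt: "agree_ge P r k \<chi>1 \<chi>2 \<Longrightarrow> j < k \<Longrightarrow> agree_gt P r j \<chi>1 \<chi>2"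
  unfolding agree_ge_def agree_gt_def by auto

lemma agree_gt_fun_upd:
  "agree_gt P r k \<chi>1 \<chi>2 \<Longrightarrow> s \<noteq> r \<Longrightarrow> agree_gt (insert s P) r k (\<chi>1(s := a)) (\<chi>2(s := a))"
  unfolding agree_gt_def by auto

lemma agree_ge_fun_upd:
  "agree_ge P r k \<chi>1 \<chi>2 \<Longrightarrow> s \<noteq> r \<Longrightarrow> agree_ge (insert s P) r k (\<chi>1(s := a)) (\<chi>2(s := a))"
  unfolding agree_ge_def by auto

lemma ext_spec_memI: "X \<in> \<X> \<Longrightarrow> F \<in> Fnc_spec \<sigma> (hap \<X>) \<Longrightarrow> ext_set X F p \<in> ext_spec \<sigma> \<X> p"
  unfolding ext_spec_def by blast

lemma ext_spec_memE:
  assumes "E \<in> ext_spec \<sigma> \<X> p"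
  obtains X F where "E = ext_set X F p" and "X \<in> \<X>" and "F \<in> Fnc_spec \<sigma> (hap \<X>)"
  using assms unfolding ext_spec_def by blast

lemma ext_spec_mono:
  assumes "\<X> \<sqsubseteq>\<^sub>H \<Y>" and "hap \<X> = hap \<Y>"
  shows "ext_spec \<sigma> \<X> p \<sqsubseteq>\<^sub>H ext_spec \<sigma> \<Y> p"
  unfolding hle_def
proof
  fix E assume "E \<in> ext_spec \<sigma> \<X> p"
  then obtain X F where E: "E = ext_set X F p" and "X \<in> \<X>" and F: "F \<in> Fnc_spec \<sigma> (hap \<Y>)"
    using assms(2) by (auto elim: ext_spec_memE)
  with assms(1) obtain Y where "Y \<in> \<Y>" "Y \<subseteq> X"
    unfolding hle_def by blast
  then have "ext_set Y F p \<in> ext_spec \<sigma> \<Y> p" and "ext_set Y F p \<subseteq> E"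
    using E F by (simp add: ext_spec_memI, auto simp: ext_set_eq_image)
  then show "\<exists>E'\<in>ext_spec \<sigma> \<Y> p. E' \<subseteq> E"
    by blast
qed

lemma ext_spec_cong:
  "\<X> \<simeq>\<^sub>H \<Y> \<Longrightarrow> hap \<X> = hap \<Y> \<Longrightarrow> ext_spec \<sigma> \<X> p \<simeq>\<^sub>H ext_spec \<sigma> \<Y> p"
  unfolding hequiv_def by (simp add: ext_spec_mono)

lemma fun_upd_in_Asg: "\<chi> \<in> Asg P \<Longrightarrow> \<chi>(p := Some f) \<in> Asg (insert p P)"
  unfolding Asg_def by auto

lemma ext_asg_in_Asg: "\<chi> \<in> Asg P \<Longrightarrow> ext_asg \<chi> F p \<in> Asg (insert p P)"
  unfolding ext_asg_def by (rule fun_upd_in_Asg)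

lemma hasg_over_ext_spec:
  assumes "hasg_over \<X> P"
  shows "hasg_over (ext_spec \<sigma> \<X> p) (insert p P)"
  unfolding hasg_over_def
proof (intro conjI ballI)
  obtain X where "X \<in> \<X>"
    using assms unfolding hasg_over_def by blast
  then have "ext_set X (\<lambda>_. f) p \<in> ext_spec \<sigma> \<X> p" for f
    using const_in_Fnc_spec unfolding ext_spec_def by blast
  then show "ext_spec \<sigma> \<X> p \<noteq> {}"
    by blast
  show "{} \<notin> ext_spec \<sigma> \<X> p"
    using assms unfolding hasg_over_def ext_spec_def ext_set_eq_image by auto

  fix E assume "E \<in> ext_spec \<sigma> \<X> p"
  then obtain X F where "E = ext_set X F p" "X \<in> \<X>"
    unfolding ext_spec_def by blast
  with assms show "E \<subseteq> Asg (insert p P)"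
    unfolding hasg_over_def ext_set_eq_image by (auto intro: ext_asg_in_Asg)
qed

lemma hasg_over_evl1: "hasg_over \<X> P \<Longrightarrow> hasg_over (evl1 \<alpha> \<X> Q \<sigma> p) (insert p P)"
  unfolding evl1_def by (simp add: hasg_over_ext_spec hasg_over_dual)

lemma prefix_ap_Nil [simp]: "prefix_ap [] = {}"
  unfolding prefix_ap_def by simp

lemma prefix_ap_Cons [simp]: "prefix_ap ((Q, \<sigma>, p) # w) = insert p (prefix_ap w)"
  unfolding prefix_ap_def by simp

lemma prefix_ap_append [simp]: "prefix_ap (u @ v) = prefix_ap u \<union> prefix_ap v"
  unfolding prefix_ap_def by simp

lemma hasg_over_evl: "hasg_over \<X> P \<Longrightarrow> hasg_over (evl \<alpha> \<X> w) (P \<union> prefix_ap w)"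
proof (induction \<alpha> \<X> w arbitrary: P rule: evl.induct)
  case (2 \<alpha> \<X> Q \<sigma> p w)
  have "hasg_over (evl \<alpha> (evl1 \<alpha> \<X> Q \<sigma> p) w) (insert p P \<union> prefix_ap w)"
    using hasg_over_evl1[OF "2.prems"] by (rule "2.IH")
  then show ?case
    by simp
qed simp

lemma evl_append: "evl \<alpha> \<X> (u @ v) = evl \<alpha> (evl \<alpha> \<X> u) v"
  by (induction \<alpha> \<X> u rule: evl.induct) auto

lemma evl1_mono:
  assumes "hasg_over \<X> P" "hasg_over \<Y> P" "\<X> \<sqsubseteq>\<^sub>H \<Y>"
  shows "evl1 \<alpha> \<X> Q \<sigma> p \<sqsubseteq>\<^sub>H evl1 \<alpha> \<Y> Q \<sigma> p"
proof -
  have "hap \<X> = hap \<Y>" and "hap (dual \<Y>) = hap (dual \<X>)"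
    using assms(1,2) hasg_over_dual by (metis hap_eq)+
  with assms(3) show ?thesis
    unfolding evl1_def by (simp add: ext_spec_mono dual_antimono)
qed

lemma evl_mono:
  "hasg_over \<X> P \<Longrightarrow> hasg_over \<Y> P \<Longrightarrow> \<X> \<sqsubseteq>\<^sub>H \<Y> \<Longrightarrow> evl \<alpha> \<X> w \<sqsubseteq>\<^sub>H evl \<alpha> \<Y> w"
proof (induction \<alpha> \<X> w arbitrary: \<Y> P rule: evl.induct)
  case (2 \<alpha> \<X> Q \<sigma> p w)
  then show ?case
    using hasg_over_evl1 evl1_mono by (metis evl.simps(2))
qed simp

lemma evl_cong:
  "hasg_over \<X> P \<Longrightarrow> hasg_over \<Y> P \<Longrightarrow> \<X> \<simeq>\<^sub>H \<Y> \<Longrightarrow> evl \<alpha> \<X> w \<simeq>\<^sub>H evl \<alpha> \<Y> w"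
  unfolding hequiv_def using evl_mono by blast

subsection \<open>Fixpoints of causal operators\<close>

definition causal :: "(tval \<Rightarrow> tval) \<Rightarrow> bool" where
  "causal \<Phi> \<longleftrightarrow> (\<forall>f g k. (\<forall>t<k. f t = g t) \<longrightarrow> \<Phi> f k = \<Phi> g k)"

text \<open>Each application of a causal operator fixes one more position, so position \<open>k\<close> of the
  iterates is stable from the \<open>Suc k\<close>-th iterate on.\<close>
definition causal_fix :: "(tval \<Rightarrow> tval) \<Rightarrow> tval" where
  "causal_fix \<Phi> = (\<lambda>k. (\<Phi> ^^ Suc k) (\<lambda>_. False) k)"

lemma causalD: "causal \<Phi> \<Longrightarrow> (\<And>t. t < k \<Longrightarrow> f t = g t) \<Longrightarrow> \<Phi> f k = \<Phi> g k"
  unfolding causal_def by blast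

lemma causal_funpow_agree:
  assumes "causal \<Phi>"
  shows "t < m \<Longrightarrow> t < n \<Longrightarrow> (\<Phi> ^^ m) f t = (\<Phi> ^^ n) f t"
proof (induction m arbitrary: n t)
  case (Suc m n t)
  then obtain n' where n: "n = Suc n'"
    by (cases n) auto
  have "(\<Phi> ^^ m) f t' = (\<Phi> ^^ n') f t'" if "t' < t" for t'
    by (rule Suc.IH) (use that Suc.prems n in auto)
  then have "\<Phi> ((\<Phi> ^^ m) f) t = \<Phi> ((\<Phi> ^^ n') f) t"
    by (rule causalD[OF assms])
  with n show ?case
    by simp
qed simp

lemma causal_fix_eq:
  assumes "causal \<Phi>"
  shows "\<Phi> (causal_fix \<Phi>) = causal_fix \<Phi>"
proof
  fix k
  have "\<Phi> (causal_fix \<Phi>) k = \<Phi> ((\<Phi> ^^ Suc k) (\<lambda>_. False)) k"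
    unfolding causal_fix_def by (intro causalD[OF assms] causal_funpow_agree[OF assms]) auto
  also have "\<dots> = causal_fix \<Phi> k"
    unfolding causal_fix_def using causal_funpow_agree[OF assms, of k "Suc (Suc k)" "Suc k"]
    by simp
  finally show "\<Phi> (causal_fix \<Phi>) k = causal_fix \<Phi> k" .
qed

lemma causal_fix_agree:
  assumes "causal \<Phi>" and "causal \<Psi>" and "\<And>f j. j \<le> k \<Longrightarrow> \<Phi> f j = \<Psi> f j"
  shows "j \<le> k \<Longrightarrow> causal_fix \<Phi> j = causal_fix \<Psi> j"
proof (induction j rule: less_induct)
  case (less j)
  have "causal_fix \<Phi> j = \<Phi> (causal_fix \<Phi>) j"
    by (simp add: causal_fix_eq[OF assms(1)])
  also have "\<dots> = \<Phi> (causal_fix \<Psi>) j"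
    using less by (intro causalD[OF assms(1)]) auto
  also have "\<dots> = \<Psi> (causal_fix \<Psi>) j"
    using assms(3) less.prems by blast
  also have "\<dots> = causal_fix \<Psi> j"
    by (simp add: causal_fix_eq[OF assms(2)])
  finally show ?case .
qed

context
  fixes P S :: "'ap set" and p q :: 'ap and K G :: "'ap fnc"
  assumes p_notin: "p \<notin> P" and q_notin: "q \<notin> P"
    and K: "K \<in> Fnc_spec (UNIV, insert q S) (insert q P)"
    and G: "G \<in> Fnc_spec specB (insert p P)"
begin

text \<open>\<open>feedback \<chi>\<close> is causal: \<open>G\<close> reads \<open>p\<close> only up to the current time and \<open>K\<close> reads \<open>q\<close>
  only strictly before it.\<close>
definition feedback :: "'ap asg \<Rightarrow> tval \<Rightarrow> tval" where
  "feedback \<chi> f = K (\<chi>(q := Some (G (\<chi>(p := Some f)))))"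

definition pval :: "'ap fnc" where
  "pval \<chi> = causal_fix (feedback \<chi>)"

definition qval :: "'ap fnc" where
  "qval \<chi> = G (\<chi>(p := Some (pval \<chi>)))"

lemma K_behavioral: "r \<in> insert q P \<Longrightarrow> behavioral (insert q P) K r"
  using K unfolding Fnc_spec_iff by blast

lemma K_strongly_behavioral: "r \<in> insert q S \<inter> insert q P \<Longrightarrow> strongly_behavioral (insert q P) K r"
  using K unfolding Fnc_spec_iff by blast

lemma G_behavioral: "r \<in> insert p P \<Longrightarrow> behavioral (insert p P) G r"
  using G unfolding Fnc_spec_specB_iff by blast

lemma G_fun_upd_agree:
  assumes "\<chi> \<in> Asg P" and "\<forall>t\<le>k. f t = g t"
  shows "G (\<chi>(p := Some f)) k = G (\<chi>(p := Some g)) k"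
  using assms
  by (intro behavioralD[OF G_behavioral] fun_upd_in_Asg) (auto simp: agree_gt_def)

lemma K_fun_upd_agree:
  assumes "\<chi> \<in> Asg P" and "\<forall>t<k. f t = g t"
  shows "K (\<chi>(q := Some f)) k = K (\<chi>(q := Some g)) k"
  using assms
  by (intro strongly_behavioralD[OF K_strongly_behavioral] fun_upd_in_Asg) (auto simp: agree_ge_def)

lemma feedback_causal: "\<chi> \<in> Asg P \<Longrightarrow> causal (feedback \<chi>)"
  unfolding causal_def feedback_def
  by (auto intro!: K_fun_upd_agree G_fun_upd_agree)

lemma pval_eq: "\<chi> \<in> Asg P \<Longrightarrow> pval \<chi> = K (\<chi>(q := Some (qval \<chi>)))"
  using causal_fix_eq[OF feedback_causal] unfolding pval_def qval_def feedback_def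
  by metis

lemma pval_agree:
  assumes \<chi>: "\<chi>1 \<in> Asg P" "\<chi>2 \<in> Asg P"
    and K_agree: "\<And>g j. j \<le> k \<Longrightarrow> K (\<chi>1(q := Some g)) j = K (\<chi>2(q := Some g)) j"
    and G_agree: "\<And>f t. t < k \<Longrightarrow> G (\<chi>1(p := Some f)) t = G (\<chi>2(p := Some f)) t"
  shows "pval \<chi>1 k = pval \<chi>2 k"
proof -
  have "feedback \<chi>1 f j = feedback \<chi>2 f j" if "j \<le> k" for f j
  proof -
    have "feedback \<chi>1 f j = K (\<chi>2(q := Some (G (\<chi>1(p := Some f))))) j"
      unfolding feedback_def using K_agree that .
    also have "\<dots> = feedback \<chi>2 f j"
      unfolding feedback_def using G_agree that by (intro K_fun_upd_agree[OF \<chi>(2)]) auto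
    finally show ?thesis .
  qed
  then show ?thesis
    unfolding pval_def using causal_fix_agree feedback_causal \<chi> by blast
qed

lemma pval_behavioral:
  assumes r: "r \<in> P"
  shows "behavioral P pval r"
  unfolding behavioral_def
proof (intro allI impI)
  fix k \<chi>1 \<chi>2 assume \<chi>: "\<chi>1 \<in> Asg P" "\<chi>2 \<in> Asg P" and agree: "agree_gt P r k \<chi>1 \<chi>2"
  have rq: "q \<noteq> r" and rp: "p \<noteq> r"
    using r p_notin q_notin by auto
  show "pval \<chi>1 k = pval \<chi>2 k"
  proof (rule pval_agree[OF \<chi>])
    fix g j assume "j \<le> k"
    with agree rq have "agree_gt (insert q P) r j (\<chi>1(q := Some g)) (\<chi>2(q := Some g))"
      by (blast intro: agree_gt_fun_upd agree_gt_mono)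
    with r \<chi> show "K (\<chi>1(q := Some g)) j = K (\<chi>2(q := Some g)) j"
      by (intro behavioralD[OF K_behavioral] fun_upd_in_Asg) auto
  next
    fix f t assume "t < k"
    with agree rp have "agree_gt (insert p P) r t (\<chi>1(p := Some f)) (\<chi>2(p := Some f))"
      by (blast intro: agree_gt_fun_upd agree_gt_mono less_imp_le)
    with r \<chi> show "G (\<chi>1(p := Some f)) t = G (\<chi>2(p := Some f)) t"
      by (intro behavioralD[OF G_behavioral] fun_upd_in_Asg) auto
  qed
qed

lemma pval_strongly_behavioral:
  assumes r: "r \<in> S \<inter> P"
  shows "strongly_behavioral P pval r"
  unfolding strongly_behavioral_def
proof (intro allI impI)
  fix k \<chi>1 \<chi>2 assume \<chi>: "\<chi>1 \<in> Asg P" "\<chi>2 \<in> Asg P" and agree: "agree_ge P r k \<chi>1 \<chi>2"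
  have rq: "q \<noteq> r" and rp: "p \<noteq> r"
    using r p_notin q_notin by auto
  show "pval \<chi>1 k = pval \<chi>2 k"
  proof (rule pval_agree[OF \<chi>])
    fix g j assume "j \<le> k"
    with agree rq have "agree_ge (insert q P) r j (\<chi>1(q := Some g)) (\<chi>2(q := Some g))"
      by (blast intro: agree_ge_fun_upd agree_ge_mono)
    with r \<chi> show "K (\<chi>1(q := Some g)) j = K (\<chi>2(q := Some g)) j"
      by (intro strongly_behavioralD[OF K_strongly_behavioral] fun_upd_in_Asg) auto
  next
    fix f t assume "t < k"
    with agree rp have "agree_gt (insert p P) r t (\<chi>1(p := Some f)) (\<chi>2(p := Some f))"
      by (blast intro: agree_gt_fun_upd agree_ge_imp_gt)
    with r \<chi> show "G (\<chi>1(p := Some f)) t = G (\<chi>2(p := Some f)) t"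
      by (intro behavioralD[OF G_behavioral] fun_upd_in_Asg) auto
  qed
qed

lemma qval_behavioral:
  assumes r: "r \<in> P"
  shows "behavioral P qval r"
  unfolding behavioral_def
proof (intro allI impI)
  fix k \<chi>1 \<chi>2 assume \<chi>: "\<chi>1 \<in> Asg P" "\<chi>2 \<in> Asg P" and agree: "agree_gt P r k \<chi>1 \<chi>2"
  have "p \<noteq> r"
    using r p_notin by auto
  with agree have "agree_gt (insert p P) r k (\<chi>1(p := Some (pval \<chi>1))) (\<chi>2(p := Some (pval \<chi>1)))"
    by (rule agree_gt_fun_upd)
  with r \<chi> have "qval \<chi>1 k = G (\<chi>2(p := Some (pval \<chi>1))) k"
    unfolding qval_def by (intro behavioralD[OF G_behavioral] fun_upd_in_Asg) auto
  also have "\<dots> = qval \<chi>2 k"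
  proof -
    have "pval \<chi>1 t = pval \<chi>2 t" if "t \<le> k" for t
      using agree_gt_mono[OF agree that] by (rule behavioralD[OF pval_behavioral[OF r] \<chi>])
    then show ?thesis
      unfolding qval_def by (simp add: G_fun_upd_agree[OF \<chi>(2)])
  qed
  finally show "qval \<chi>1 k = qval \<chi>2 k" .
qed

lemma mutual_fixpoint:
  obtains A B where "\<forall>\<chi>\<in>Asg P. A \<chi> = K (\<chi>(q := Some (B \<chi>))) \<and> B \<chi> = G (\<chi>(p := Some (A \<chi>)))"
    and "A \<in> Fnc_spec (UNIV, S) P" and "B \<in> Fnc_spec specB P"
proof
  show "\<forall>\<chi>\<in>Asg P. pval \<chi> = K (\<chi>(q := Some (qval \<chi>))) \<and> qval \<chi> = G (\<chi>(p := Some (pval \<chi>)))"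
    using pval_eq qval_def by blast
  show "pval \<in> Fnc_spec (UNIV, S) P"
    unfolding Fnc_spec_iff using pval_behavioral pval_strongly_behavioral by blast
  show "qval \<in> Fnc_spec specB P"
    unfolding Fnc_spec_specB_iff using qval_behavioral by blast
qed

end

subsection \<open>Swapping adjacent quantifiers\<close>

lemma ext_asg_mutual_twist:
  assumes "p \<noteq> q" and A: "A \<chi> = K (\<chi>(q := Some (B \<chi>)))" and B: "B \<chi> = G (\<chi>(p := Some (A \<chi>)))"
  shows "ext_asg (ext_asg \<chi> A p) G q = ext_asg (ext_asg \<chi> B q) K p"
proof -
  have "ext_asg (ext_asg \<chi> A p) G q = \<chi>(p := Some (A \<chi>), q := Some (B \<chi>))"
    unfolding ext_asg_def by (simp add: B[symmetric])
  also have "\<dots> = \<chi>(q := Some (B \<chi>), p := Some (A \<chi>))"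
    using assms(1) by (rule fun_upd_twist)
  also have "\<dots> = ext_asg (ext_asg \<chi> B q) K p"
    unfolding ext_asg_def by (simp add: A[symmetric])
  finally show ?thesis .
qed

text \<open>Swapping a non-coherent \<open>p\<close> with the coherent \<open>q\<close> after it: on the left the functor
  \<open>G\<close> of \<open>q\<close> reads \<open>p\<close>, on the right the functor \<open>K\<close> of \<open>p\<close> reads \<open>q\<close> strictly in the past.
  Evaluating \<open>G\<close> and \<open>K\<close> against each other by \<open>mutual_fixpoint\<close> yields an assignment
  lying in both chosen sets.\<close>
lemma ext_spec_dual_swap_meets:
  assumes \<X>: "hasg_over \<X> P" and pq: "p \<noteq> q" and p: "p \<notin> P" and q: "q \<notin> P"
    and L: "L \<in> ext_spec specB (dual (ext_spec (UNIV, S) (dual \<X>) p)) q"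
    and E: "E \<in> ext_spec (UNIV, insert q S) (dual (ext_spec specB \<X> q)) p"
  shows "L \<inter> E \<noteq> {}"
proof -
  define \<A> where "\<A> = ext_spec (UNIV, S) (dual \<X>) p"
  define \<B> where "\<B> = ext_spec specB \<X> q"
  have hap_\<X>: "hap \<X> = P" and hap_dual_\<X>: "hap (dual \<X>) = P"
    using \<X> by (simp_all add: hap_eq hasg_over_dual)
  have hap_\<A>: "hap (dual \<A>) = insert p P" and hap_\<B>: "hap (dual \<B>) = insert q P"
    unfolding \<A>_def \<B>_def using \<X> by (simp_all add: hap_eq hasg_over_dual hasg_over_ext_spec)
  obtain d G where L_eq: "L = ext_set (d ` \<A>) G q" and d: "choice_fun \<A> d"
    and G: "G \<in> Fnc_spec specB (insert p P)"
    using L[folded \<A>_def] hap_\<A> by (auto elim!: ext_spec_memE dual_memE)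
  obtain w K where E_eq: "E = ext_set (w ` \<B>) K p" and w: "choice_fun \<B> w"
    and K: "K \<in> Fnc_spec (UNIV, insert q S) (insert q P)"
    using E[folded \<B>_def] hap_\<B> by (auto elim!: ext_spec_memE dual_memE)
  obtain A B where AB: "\<forall>\<chi>\<in>Asg P. A \<chi> = K (\<chi>(q := Some (B \<chi>))) \<and> B \<chi> = G (\<chi>(p := Some (A \<chi>)))"
    and A: "A \<in> Fnc_spec (UNIV, S) P" and B: "B \<in> Fnc_spec specB P"
    by (rule mutual_fixpoint[OF p q K G])
  have B_ext: "ext_set X B q \<in> \<B>" if "X \<in> \<X>" for X
    unfolding \<B>_def using that B hap_\<X> by (simp add: ext_spec_memI)
  with w have "choice_fun ((\<lambda>X. (\<lambda>\<chi>. ext_asg \<chi> B q) ` X) ` \<X>) w"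
    unfolding choice_fun_def ext_set_eq_image by auto
  then obtain c where c: "choice_fun \<X> c" and cw: "\<forall>X\<in>\<X>. ext_asg (c X) B q = w (ext_set X B q)"
    unfolding ext_set_eq_image by (rule choice_fun_image_pullback)
  have A_ext: "ext_set (c ` \<X>) A p \<in> \<A>"
    unfolding \<A>_def using A hap_dual_\<X> by (simp add: ext_spec_memI dual_memI[OF c])
  with d have "d (ext_set (c ` \<X>) A p) \<in> ext_set (c ` \<X>) A p"
    unfolding choice_fun_def by blast
  then obtain X where X: "X \<in> \<X>" and dX: "d (ext_set (c ` \<X>) A p) = ext_asg (c X) A p"
    unfolding ext_set_eq_image by blast
  have "c X \<in> Asg P"
    using \<X> c X unfolding hasg_over_def choice_fun_def by blast
  with AB pq have "ext_asg (ext_asg (c X) A p) G q = ext_asg (ext_asg (c X) B q) K p"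
    by (intro ext_asg_mutual_twist) blast+
  moreover have "ext_asg (ext_asg (c X) A p) G q \<in> L"
    unfolding L_eq dX[symmetric] using A_ext by (simp add: ext_set_eq_image)
  moreover have "ext_asg (ext_asg (c X) B q) K p \<in> E"
    unfolding E_eq ext_set_eq_image using cw X B_ext[OF X] by (metis imageI)
  ultimately show ?thesis
    by (metis IntI empty_iff)
qed

lemma ext_spec_dual_swap:
  assumes "hasg_over \<X> P" and "p \<noteq> q" and "p \<notin> P" and "q \<notin> P"
  shows "ext_spec specB (dual (ext_spec (UNIV, S) (dual \<X>) p)) q
     \<sqsubseteq>\<^sub>H dual (ext_spec (UNIV, insert q S) (dual (ext_spec specB \<X> q)) p)"
  unfolding hle_dual_iff using ext_spec_dual_swap_meets[OF assms] by blast

lemma evl1_swap: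
  assumes "hasg_over \<X> P" and "p \<noteq> q" and "p \<notin> P" and "q \<notin> P" and "Q \<noteq> coh_quant \<alpha>"
  shows "evl1 \<alpha> (evl1 \<alpha> \<X> Q (UNIV, S) p) (coh_quant \<alpha>) specB q
     \<sqsubseteq>\<^sub>H evl1 \<alpha> (evl1 \<alpha> \<X> (coh_quant \<alpha>) specB q) Q (UNIV, insert q S) p"
  using ext_spec_dual_swap[OF assms(1-4)] assms(5) unfolding evl1_def by simp

lemma evl_defer_noncoherent:
  assumes "\<forall>(Q', \<sigma>', q)\<in>set F. Q' = coh_quant \<alpha> \<and> \<sigma>' = specB"
    and "Q \<noteq> coh_quant \<alpha>" and "hasg_over \<X> P" and "p \<notin> P" and "p \<notin> prefix_ap F"
    and "prefix_ap F \<inter> P = {}" and "distinct (map (\<lambda>(Q, \<sigma>, p). p) F)"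
  shows "evl \<alpha> \<X> ((Q, (UNIV, S), p) # F) \<sqsubseteq>\<^sub>H evl \<alpha> \<X> (F @ [(Q, (UNIV, S \<union> prefix_ap F), p)])"
  using assms
proof (induction F arbitrary: \<X> P S)
  case (Cons a F)
  obtain q where a: "a = (coh_quant \<alpha>, specB, q)"
    using Cons.prems(1) by (cases a) auto
  have pq: "p \<noteq> q" and q: "q \<notin> P" and qF: "q \<notin> prefix_ap F"
    using Cons.prems(5-7) a unfolding prefix_ap_def by auto
  let ?\<X>q = "evl1 \<alpha> \<X> (coh_quant \<alpha>) specB q"
  have \<X>q: "hasg_over ?\<X>q (insert q P)"
    using Cons.prems(3) by (rule hasg_over_evl1)
  have "evl \<alpha> \<X> ((Q, (UNIV, S), p) # a # F)
      = evl \<alpha> (evl1 \<alpha> (evl1 \<alpha> \<X> Q (UNIV, S) p) (coh_quant \<alpha>) specB q) F"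
    using a by simp
  also have "\<dots> \<sqsubseteq>\<^sub>H evl \<alpha> (evl1 \<alpha> ?\<X>q Q (UNIV, insert q S) p) F"
  proof (rule evl_mono)
    show "hasg_over (evl1 \<alpha> (evl1 \<alpha> \<X> Q (UNIV, S) p) (coh_quant \<alpha>) specB q) (insert q (insert p P))"
      using Cons.prems(3) by (intro hasg_over_evl1)
    show "hasg_over (evl1 \<alpha> ?\<X>q Q (UNIV, insert q S) p) (insert q (insert p P))"
      using hasg_over_evl1[OF \<X>q] by (simp add: insert_commute)
    show "evl1 \<alpha> (evl1 \<alpha> \<X> Q (UNIV, S) p) (coh_quant \<alpha>) specB q
        \<sqsubseteq>\<^sub>H evl1 \<alpha> ?\<X>q Q (UNIV, insert q S) p"
      using Cons.prems(3) pq Cons.prems(4) q Cons.prems(2) by (rule evl1_swap)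
  qed
  also have "\<dots> = evl \<alpha> ?\<X>q ((Q, (UNIV, insert q S), p) # F)"
    by simp
  also have "\<dots> \<sqsubseteq>\<^sub>H evl \<alpha> ?\<X>q (F @ [(Q, (UNIV, insert q S \<union> prefix_ap F), p)])"
    using Cons.prems(1,2,4-7) a pq qF by (intro Cons.IH[OF _ _ \<X>q]) auto
  also have "\<dots> = evl \<alpha> \<X> ((a # F) @ [(Q, (UNIV, S \<union> prefix_ap (a # F)), p)])"
    using a by simp
  finally show ?case .
qed simp

subsection \<open>Canonical forms\<close>

lemma lead_props_eq_prefix_ap: "lead_props L w = prefix_ap [(Q, \<sigma>, p) \<leftarrow> w. Q = L]"
  unfolding lead_props_def prefix_ap_def by force

lemma canon_Cons_coherent:
  "Q = coh_quant \<alpha> \<Longrightarrow> canon \<alpha> ((Q, \<sigma>, p) # w) = (Q, \<sigma>, p) # canon \<alpha> w"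
  unfolding canon_def by simp

lemma canon_Cons_noncoherent:
  fixes w :: "'ap prefix"
  assumes "Q \<noteq> coh_quant \<alpha>"
  defines "F \<equiv> [(Q', \<sigma>', p') \<leftarrow> w. Q' = coh_quant \<alpha>]"
  shows "canon \<alpha> ((Q, \<sigma>, p) # w) = (F @ [(Q, (UNIV, prefix_ap F), p)]) @ canon_trail (coh_quant \<alpha>) w"
    and "canon \<alpha> w = F @ canon_trail (coh_quant \<alpha>) w"
  using assms unfolding canon_def by (simp_all add: spec_union_def specB_def lead_props_eq_prefix_ap)

lemma evl_defer_past_coherent:
  fixes w :: "'ap prefix"
  assumes "behavioral_prefix w" and "distinct (map (\<lambda>(Q, \<sigma>, p). p) w)"
    and "Q \<noteq> coh_quant \<alpha>" and "hasg_over \<X> P" and "p \<notin> P" and "p \<notin> prefix_ap w"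
    and "prefix_ap w \<inter> P = {}"
  defines "F \<equiv> [(Q', \<sigma>', p') \<leftarrow> w. Q' = coh_quant \<alpha>]"
  shows "evl \<alpha> \<X> ((Q, specB, p) # F) \<sqsubseteq>\<^sub>H evl \<alpha> \<X> (F @ [(Q, (UNIV, prefix_ap F), p)])"
proof -
  have "prefix_ap F \<subseteq> prefix_ap w"
    unfolding F_def prefix_ap_def by force
  moreover have "\<forall>(Q', \<sigma>', q)\<in>set F. Q' = coh_quant \<alpha> \<and> \<sigma>' = specB"
    using assms(1) unfolding F_def behavioral_prefix_def by auto
  moreover have "distinct (map (\<lambda>(Q, \<sigma>, p). p) F)"
    unfolding F_def using assms(2) by (rule distinct_map_filter)
  ultimately have "evl \<alpha> \<X> ((Q, (UNIV, {}), p) # F)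
      \<sqsubseteq>\<^sub>H evl \<alpha> \<X> (F @ [(Q, (UNIV, {} \<union> prefix_ap F), p)])"
    using assms(3-7) by (intro evl_defer_noncoherent) auto
  then show ?thesis
    by (simp add: specB_def)
qed

lemma evl_le_canon:
  "hasg_over \<X> P \<Longrightarrow> behavioral_prefix w \<Longrightarrow> distinct (map (\<lambda>(Q, \<sigma>, p). p) w) \<Longrightarrow>
    prefix_ap w \<inter> P = {} \<Longrightarrow> evl \<alpha> \<X> w \<sqsubseteq>\<^sub>H evl \<alpha> \<X> (canon \<alpha> w)"
proof (induction w arbitrary: \<X> P)
  case Nil
  then show ?case
    by (simp add: canon_def)
next
  case (Cons a w)
  obtain Q p where a: "a = (Q, specB, p)"
    using Cons.prems(2) unfolding behavioral_prefix_def by (cases a) auto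
  have w: "behavioral_prefix w" "distinct (map (\<lambda>(Q, \<sigma>, p). p) w)"
    using Cons.prems(2,3) unfolding behavioral_prefix_def by auto
  have p: "p \<notin> P" "p \<notin> prefix_ap w" and wP: "prefix_ap w \<inter> P = {}"
    using Cons.prems(3,4) a unfolding prefix_ap_def by auto
  let ?\<X>p = "evl1 \<alpha> \<X> Q specB p"
  have \<X>p: "hasg_over ?\<X>p (insert p P)"
    using Cons.prems(1) by (rule hasg_over_evl1)
  have IH: "evl \<alpha> ?\<X>p w \<sqsubseteq>\<^sub>H evl \<alpha> ?\<X>p (canon \<alpha> w)"
    using wP p by (intro Cons.IH[OF \<X>p w]) auto
  show ?case
  proof (cases "Q = coh_quant \<alpha>")
    case True
    with IH a show ?thesis
      by (simp add: canon_Cons_coherent)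
  next
    case False
    define F where "F = [(Q', \<sigma>', p') \<leftarrow> w. Q' = coh_quant \<alpha>]"
    define T where "T = canon_trail (coh_quant \<alpha>) w"
    have "evl \<alpha> \<X> (a # w) \<sqsubseteq>\<^sub>H evl \<alpha> (evl \<alpha> \<X> (a # F)) T"
      using IH a unfolding canon_Cons_noncoherent(2)[OF False] F_def T_def by (simp add: evl_append)
    also have "\<dots> \<sqsubseteq>\<^sub>H evl \<alpha> (evl \<alpha> \<X> (F @ [(Q, (UNIV, prefix_ap F), p)])) T"
    proof (rule evl_mono)
      show "hasg_over (evl \<alpha> \<X> (a # F)) (P \<union> prefix_ap (a # F))"
        using Cons.prems(1) by (rule hasg_over_evl)
      show "hasg_over (evl \<alpha> \<X> (F @ [(Q, (UNIV, prefix_ap F), p)])) (P \<union> prefix_ap (a # F))"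
        using hasg_over_evl[OF Cons.prems(1), of \<alpha> "F @ [(Q, (UNIV, prefix_ap F), p)]"] a
        by (simp add: insert_commute)
      show "evl \<alpha> \<X> (a # F) \<sqsubseteq>\<^sub>H evl \<alpha> \<X> (F @ [(Q, (UNIV, prefix_ap F), p)])"
        unfolding a F_def using w False Cons.prems(1) p wP by (rule evl_defer_past_coherent)
    qed
    also have "\<dots> = evl \<alpha> \<X> (canon \<alpha> (a # w))"
      unfolding a canon_Cons_noncoherent(1)[OF False] F_def T_def by (simp add: evl_append)
    finally show ?thesis .
  qed
qed

subsection \<open>Evolution under the opposite flag\<close>

lemma flag_bar_flag_bar [simp]: "flag_bar (flag_bar \<beta>) = \<beta>"
  by (cases \<beta>) auto

lemma coh_quant_flag_bar: "Q = coh_quant (flag_bar \<beta>) \<longleftrightarrow> Q \<noteq> coh_quant \<beta>"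
  by (cases \<beta>; cases Q) auto

lemma evl1_flag_bar_dual:
  assumes \<X>: "hasg_over \<X> P"
  shows "dual (evl1 (flag_bar \<beta>) \<X> Q \<sigma> p) \<simeq>\<^sub>H evl1 \<beta> (dual \<X>) Q \<sigma> p"
proof (cases "Q = coh_quant \<beta>")
  case True
  then show ?thesis
    unfolding evl1_def coh_quant_flag_bar by (simp add: dual_dual_hequiv)
next
  case False
  have "hap \<X> = hap (dual (dual \<X>))"
    using hap_eq[OF \<X>] hap_eq[OF hasg_over_dual[OF hasg_over_dual[OF \<X>]]] by simp
  then have "ext_spec \<sigma> \<X> p \<simeq>\<^sub>H ext_spec \<sigma> (dual (dual \<X>)) p"
    by (intro ext_spec_cong hequiv_sym[OF dual_dual_hequiv])
  with False show ?thesis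
    unfolding evl1_def coh_quant_flag_bar by (simp add: dual_cong)
qed

lemma evl_flag_bar_dual:
  "hasg_over \<X> P \<Longrightarrow> evl (flag_bar \<beta>) \<X> w \<simeq>\<^sub>H dual (evl \<beta> (dual \<X>) w)"
proof (induction w arbitrary: \<X> P)
  case Nil
  then show ?case
    by (simp add: hequiv_sym[OF dual_dual_hequiv])
next
  case (Cons a w)
  obtain Q \<sigma> p where a: "a = (Q, \<sigma>, p)"
    by (cases a)
  let ?\<X>p = "evl1 (flag_bar \<beta>) \<X> Q \<sigma> p"
  have \<X>p: "hasg_over ?\<X>p (insert p P)"
    using Cons.prems by (rule hasg_over_evl1)
  have "evl (flag_bar \<beta>) \<X> (a # w) = evl (flag_bar \<beta>) ?\<X>p w"
    using a by simp
  also have "\<dots> \<simeq>\<^sub>H dual (evl \<beta> (dual ?\<X>p) w)"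
    using \<X>p by (rule Cons.IH)
  also have "\<dots> \<simeq>\<^sub>H dual (evl \<beta> (evl1 \<beta> (dual \<X>) Q \<sigma> p) w)"
    using hasg_over_dual[OF \<X>p] hasg_over_evl1[OF hasg_over_dual[OF Cons.prems]]
      evl1_flag_bar_dual[OF Cons.prems]
    by (intro dual_cong evl_cong)
  also have "\<dots> = dual (evl \<beta> (dual \<X>) (a # w))"
    using a by simp
  finally show ?case .
qed

theorem mainTheorem13:
  fixes \<alpha> :: aflag and \<X> :: "'ap hasg" and w :: "'ap prefix"
  assumes "is_hasg \<X>"
    and "behavioral_prefix w"
    and "distinct (map (\<lambda>(Q, \<sigma>, p). p) w)"
    and "prefix_ap w \<inter> hap \<X> = {}"
  shows "evl \<alpha> \<X> (canon (flag_bar \<alpha>) w) \<sqsubseteq>\<^sub>H evl \<alpha> \<X> w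
       \<and> evl \<alpha> \<X> w \<sqsubseteq>\<^sub>H evl \<alpha> \<X> (canon \<alpha> w)"
proof
  have \<X>: "hasg_over \<X> (hap \<X>)"
    using assms(1) by (rule hasg_over_hap)
  then show "evl \<alpha> \<X> w \<sqsubseteq>\<^sub>H evl \<alpha> \<X> (canon \<alpha> w)"
    using assms(2-4) by (rule evl_le_canon)
  have dual_evl: "evl \<alpha> \<X> v \<simeq>\<^sub>H dual (evl (flag_bar \<alpha>) (dual \<X>) v)" for v
    using evl_flag_bar_dual[OF \<X>, of "flag_bar \<alpha>"] by simp
  have "evl \<alpha> \<X> (canon (flag_bar \<alpha>) w)
      \<sqsubseteq>\<^sub>H dual (evl (flag_bar \<alpha>) (dual \<X>) (canon (flag_bar \<alpha>) w))"
    using dual_evl unfolding hequiv_def by blast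
  also have "\<dots> \<sqsubseteq>\<^sub>H dual (evl (flag_bar \<alpha>) (dual \<X>) w)"
    using hasg_over_dual[OF \<X>] assms(2-4) by (intro dual_antimono evl_le_canon)
  also have "\<dots> \<sqsubseteq>\<^sub>H evl \<alpha> \<X> w"
    using dual_evl unfolding hequiv_def by blast
  finally show "evl \<alpha> \<X> (canon (flag_bar \<alpha>) w) \<sqsubseteq>\<^sub>H evl \<alpha> \<X> w" .
qed

end
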